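(* Let $X$ be a connected locally compact Polish space and $B\subseteq X$ dense. If $\succeq$ and $\succeq'$ are continuous preferences on $X$ with $\succeq\cap(B\times B)=\succeq'\cap(B\times B)$, then $\succeq=\succeq'$.
   Context: A preference is a complete and transitive binary relation on $X$; it is continuous if it is a closed subset of $X\times X$. *)

theory Defs
  imports "HOL-Analysis.Analysis"
begin

definition preference :: "('a \<times> 'a) set \<Rightarrow> bool" where
  "preference R \<longleftrightarrow> (\<forall>x y. (x, y) \<in> R \<or> (y, x) \<in> R) \<and> trans R"

definition continuous_preference :: "('a::topological_space \<times> 'a) set \<Rightarrow> bool" where
  "continuous_preference R \<longleftrightarrow> preference R \<and> closed R"

end

theory Submission
  imports Defs
begin

text \<open>Read \<open>(a, b) \<in> R\<close> as \<open>a \<succeq> b\<close>; by completeness \<open>(a, b) \<notin> R\<close> means \<open>b \<succ> a\<close>.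
  If \<open>x \<prec>' y\<close>, the open sets \<open>{z. x \<prec>' z}\<close> and \<open>{z. z \<prec>' y}\<close> are nonempty and, by
  transitivity, cover the connected space, so they meet in a nonempty open set, which contains a
  point of the dense set \<open>B\<close>. Moreover \<open>w \<prec>' u\<close> with \<open>u \<in> B\<close> forces \<open>u \<succeq> w\<close>: otherwise the open
  set \<open>{v. u \<prec> v \<and> v \<prec>' u}\<close> contains \<open>w\<close>, hence a point of \<open>B\<close>, contradicting agreement on \<open>B\<close>.
  Now if \<open>x \<succeq> y\<close> but \<open>x \<prec>' y\<close>, pick \<open>x \<prec>' b\<^sub>1 \<prec>' b\<^sub>2 \<prec>' y\<close> in \<open>B\<close>; then
  \<open>b\<^sub>1 \<succeq> x \<succeq> y \<succeq> b\<^sub>2\<close>, whereas \<open>b\<^sub>1 \<prec> b\<^sub>2\<close> by agreement on \<open>B\<close>.\<close>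

lemma closed_converse:
  fixes R :: "('a::topological_space \<times> 'b::topological_space) set"
  assumes "closed R"
  shows "closed (R\<inverse>)"
proof -
  have "closed (prod.swap -` R)"
    by (rule closed_vimage[OF assms]) (intro continuous_intros)
  moreover have "prod.swap -` R = R\<inverse>"
    by auto
  ultimately show ?thesis
    by simp
qed

lemma open_not_in_closed_relation:
  fixes R :: "('a::topological_space \<times> 'b::topological_space) set"
  assumes "closed R"
  shows "open {v. (u, v) \<notin> R}"
proof -
  have "closed (Pair u -` R)"
    by (rule closed_vimage[OF assms]) (intro continuous_intros)
  then show ?thesis
    by (simp add: open_closed Compl_eq vimage_def)
qed

lemma continuous_preference_converse:
  assumes "continuous_preference R"
  shows "continuous_preference (R\<inverse>)"
  using assms closed_converse
  unfolding continuous_preference_def preference_def by auto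

lemma continuous_preference_strictly_between_dense:
  fixes B :: "'a::topological_space set"
  assumes "connected (UNIV :: 'a set)"
    and "closure B = UNIV"
    and "continuous_preference R"
    and "(x, y) \<notin> R"
  shows "\<exists>b\<in>B. (x, b) \<notin> R \<and> (b, y) \<notin> R"
proof -
  have "trans R" "closed R"
    using assms(3) unfolding continuous_preference_def preference_def by auto
  define U where "U = {z. (x, z) \<notin> R}"
  define L where "L = {z. (z, y) \<notin> R}"
  have "open U"
    unfolding U_def using open_not_in_closed_relation[OF \<open>closed R\<close>] .
  moreover have "open L"
    using open_not_in_closed_relation[OF closed_converse[OF \<open>closed R\<close>]]
    unfolding L_def by simp
  moreover have "UNIV \<subseteq> U \<union> L"
    using \<open>trans R\<close> \<open>(x, y) \<notin> R\<close> unfolding U_def L_def by (auto dest: transD)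
  moreover have "U \<noteq> {}" "L \<noteq> {}"
    using \<open>(x, y) \<notin> R\<close> unfolding U_def L_def by auto
  ultimately have "U \<inter> L \<noteq> {}"
    using connectedD[OF assms(1), of U L] by auto
  then have "U \<inter> L \<inter> B \<noteq> {}"
    using open_Int_closure_eq_empty[of "U \<inter> L" B] \<open>open U\<close> \<open>open L\<close> assms(2) by auto
  then show ?thesis
    unfolding U_def L_def by blast
qed

lemma weak_preference_if_strict_at_dense_point:
  fixes B :: "'a::topological_space set"
  assumes "closure B = UNIV"
    and "continuous_preference R"
    and "continuous_preference R'"
    and agree: "R \<inter> (B \<times> B) = R' \<inter> (B \<times> B)"
    and "u \<in> B"
    and "(w, u) \<notin> R'"
  shows "(u, w) \<in> R"
proof (rule ccontr)
  assume "(u, w) \<notin> R"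
  have complete: "\<And>a b. (a, b) \<in> R \<or> (b, a) \<in> R"
    using assms(2) unfolding continuous_preference_def preference_def by auto
  define N where "N = {v. (u, v) \<notin> R} \<inter> {v. (v, u) \<notin> R'}"
  have "closed R" "closed R'"
    using assms(2,3) unfolding continuous_preference_def by auto
  then have "open N"
    using open_not_in_closed_relation[of R u] open_not_in_closed_relation[of "R'\<inverse>" u]
    unfolding N_def by (simp add: open_Int closed_converse)
  moreover have "w \<in> N"
    using \<open>(u, w) \<notin> R\<close> \<open>(w, u) \<notin> R'\<close> unfolding N_def by simp
  ultimately have "N \<inter> B \<noteq> {}"
    using open_Int_closure_eq_empty[of N B] assms(1) by auto
  then obtain a where "a \<in> B" "(u, a) \<notin> R" "(a, u) \<notin> R'"
    unfolding N_def by blast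
  moreover from this have "(a, u) \<notin> R"
    using agree \<open>u \<in> B\<close> by blast
  ultimately show False
    using complete by blast
qed

lemma continuous_preference_subset_if_agree_on_dense:
  fixes B :: "'a::topological_space set"
  assumes conn: "connected (UNIV :: 'a set)"
    and dense: "closure B = UNIV"
    and pref: "continuous_preference R"
    and pref': "continuous_preference R'"
    and agree: "R \<inter> (B \<times> B) = R' \<inter> (B \<times> B)"
  shows "R \<subseteq> R'"
proof (clarify, rule ccontr)
  fix x y
  assume "(x, y) \<in> R" "(x, y) \<notin> R'"
  obtain b\<^sub>2 where "b\<^sub>2 \<in> B" "(x, b\<^sub>2) \<notin> R'" "(b\<^sub>2, y) \<notin> R'"
    using continuous_preference_strictly_between_dense[OF conn dense pref' \<open>(x, y) \<notin> R'\<close>]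
    by blast
  moreover obtain b\<^sub>1 where "b\<^sub>1 \<in> B" "(x, b\<^sub>1) \<notin> R'" "(b\<^sub>1, b\<^sub>2) \<notin> R'"
    using continuous_preference_strictly_between_dense[OF conn dense pref' \<open>(x, b\<^sub>2) \<notin> R'\<close>]
    by blast
  ultimately have "(b\<^sub>1, b\<^sub>2) \<notin> R"
    using agree by blast
  have "(b\<^sub>1, x) \<in> R"
    using weak_preference_if_strict_at_dense_point[OF dense pref pref' agree]
      \<open>b\<^sub>1 \<in> B\<close> \<open>(x, b\<^sub>1) \<notin> R'\<close> .
  moreover have "(y, b\<^sub>2) \<in> R"
  proof -
    have "R\<inverse> \<inter> (B \<times> B) = R'\<inverse> \<inter> (B \<times> B)"
      using agree by blast
    then show ?thesis
      using weak_preference_if_strict_at_dense_point[OF dense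
          continuous_preference_converse[OF pref] continuous_preference_converse[OF pref']]
        \<open>b\<^sub>2 \<in> B\<close> \<open>(b\<^sub>2, y) \<notin> R'\<close>
      by blast
  qed
  moreover have "trans R"
    using pref unfolding continuous_preference_def preference_def by blast
  ultimately have "(b\<^sub>1, b\<^sub>2) \<in> R"
    using \<open>(x, y) \<in> R\<close> by (meson transD)
  with \<open>(b\<^sub>1, b\<^sub>2) \<notin> R\<close> show False
    by contradiction
qed

theorem theorem13:
  fixes B :: "'a::polish_space set"
    and R R' :: "('a \<times> 'a) set"
  assumes "connected (UNIV :: 'a set)"
    and "locally_compact_space (euclidean :: 'a topology)"
    and "closure B = UNIV"
    and "continuous_preference R"
    and "continuous_preference R'"
    and "R \<inter> (B \<times> B) = R' \<inter> (B \<times> B)"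
  shows "R = R'"
proof (rule subset_antisym)
  show "R \<subseteq> R'"
    using continuous_preference_subset_if_agree_on_dense assms(1,3-6) .
  show "R' \<subseteq> R"
    using continuous_preference_subset_if_agree_on_dense assms(1,3,5,4) assms(6)[symmetric] .
qed

end
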